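(* Let $n\ge1$ and $r\ge0$. Then \[ \sum_{\lambda\in\mathcal P_r(n)}\big(d^\lambda(q)\big)^2=(1+q)^n\,n!. \]
   Context: Partitions are identified with Young diagrams. A domino is a set of two cells sharing an edge (vertical if in one column). $\delta_r=(r,r-1,\dots,1)$; every partition has a 2-core (obtained by repeatedly removing dominoes while staying a partition) equal to a unique $\delta_r$; $\mathcal P_r(n)$ is the set of partitions with 2-core $\delta_r$ and size $|\delta_r|+2n$. A standard domino tableau of shape $\lambda\in\mathcal P_r(n)$ is a chain $\delta_r=\lambda^0\subset\cdots\subset\lambda^n=\lambda$ with each $\lambda^k/\lambda^{k-1}$ a domino; its spin $sp(D)$ is half the number of vertical dominoes. $d^\lambda(q)=\sum_D q^{sp(D)}$, over all standard domino tableaux $D$ of shape $\lambda$. *)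

theory Defs
  imports Complex_Main
begin

text \<open>Young diagrams: finite sets of cells (row, column), 0-indexed, closed downwards.\<close>

type_synonym cell = "nat \<times> nat"

definition is_partition :: "cell set \<Rightarrow> bool" where
  "is_partition lam \<longleftrightarrow> finite lam \<and>
     (\<forall>i j i' j'. (i, j) \<in> lam \<longrightarrow> i' \<le> i \<longrightarrow> j' \<le> j \<longrightarrow> (i', j') \<in> lam)"

text \<open>delta r = (r, r-1, ..., 1): row i has r - i cells.\<close>
definition delta :: "nat \<Rightarrow> cell set" where
  "delta r = {(i, j). i + j < r}"

definition vertical_domino :: "cell set \<Rightarrow> bool" where
  "vertical_domino S \<longleftrightarrow> (\<exists>i j. S = {(i, j), (Suc i, j)})"

definition horizontal_domino :: "cell set \<Rightarrow> bool" where
  "horizontal_domino S \<longleftrightarrow> (\<exists>i j. S = {(i, j), (i, Suc j)})"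

definition is_domino :: "cell set \<Rightarrow> bool" where
  "is_domino S \<longleftrightarrow> vertical_domino S \<or> horizontal_domino S"

definition domino_step :: "cell set \<Rightarrow> cell set \<Rightarrow> bool" where
  "domino_step mu nu \<longleftrightarrow> is_partition mu \<and> is_partition nu \<and> mu \<subseteq> nu \<and> is_domino (nu - mu)"

text \<open>The 2-core of lambda is delta r: delta r is obtained from lambda by repeatedly
  removing dominoes while staying a partition.\<close>
definition has_2core :: "nat \<Rightarrow> cell set \<Rightarrow> bool" where
  "has_2core r lam \<longleftrightarrow> is_partition lam \<and> domino_step\<^sup>*\<^sup>* (delta r) lam"

definition P :: "nat \<Rightarrow> nat \<Rightarrow> cell set set" where
  "P r n = {lam. is_partition lam \<and> has_2core r lam \<and> card lam = card (delta r) + 2 * n}"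

text \<open>Standard domino tableaux of shape lambda in P r n: chains
  delta r = D!0 \<subset> ... \<subset> D!n = lambda of partitions with domino differences.\<close>
definition sdt :: "nat \<Rightarrow> nat \<Rightarrow> cell set \<Rightarrow> cell set list set" where
  "sdt r n lam = {D. length D = Suc n \<and> D ! 0 = delta r \<and> D ! n = lam \<and>
                    (\<forall>k<n. domino_step (D ! k) (D ! Suc k))}"

definition num_vertical :: "cell set list \<Rightarrow> nat" where
  "num_vertical D = card {k. Suc k < length D \<and> vertical_domino (D ! Suc k - D ! k)}"

definition spin :: "cell set list \<Rightarrow> real" where
  "spin D = real (num_vertical D) / 2"

text \<open>d^lambda(q), evaluated at a real q > 0 (q^(1/2) interpreted as positive root).\<close>
definition dpoly :: "nat \<Rightarrow> nat \<Rightarrow> cell set \<Rightarrow> real \<Rightarrow> real" where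
  "dpoly r n lam q = (\<Sum>D\<in>sdt r n lam. q powr spin D)"

end

theory Submission
  imports Defs
begin

text \<open>
  Adding a domino is an up-step, removing one a down-step, in the graded graph of partitions
  with 2-core \<open>\<delta>\<^sub>r\<close>. Weight a step by \<open>sqrt q\<close> if its domino is vertical and by 1 otherwise;
  then \<open>d\<^sup>\<lambda>(q)\<close> is the total weight of the paths from \<open>\<delta>\<^sub>r\<close> to \<open>\<lambda>\<close>. The weighted down and up
  operators satisfy \<open>DU = UD + (1 + q) Id\<close>: on the diagonal, every partition has exactly one
  more addable than removable horizontal domino (and, by conjugation, vertical domino); off the
  diagonal, each pair "add a domino, then remove a different one" is completed to a unique pair
  "remove a domino, then add a different one" of the same weight. Hence
  \<open>\<Sum>\<^sub>\<mu> w(\<lambda>,\<mu>) d\<^sup>\<mu> = (n + 1)(1 + q) d\<^sup>\<lambda>\<close> for \<open>\<lambda>\<close> of rank \<open>n\<close>. Splitting off the last domino of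
  each tableau then gives \<open>S(n + 1) = (n + 1)(1 + q) S(n)\<close> for \<open>S(n) = \<Sum>\<^bsub>\<lambda>\<in>P\<^sub>r(n)\<^esub> (d\<^sup>\<lambda>)\<^sup>2\<close>.
\<close>

section \<open>Partitions and dominoes\<close>

lemma is_partition_delta: "is_partition (delta r)"
proof -
  have "delta r \<subseteq> {..<r} \<times> {..<r}" by (auto simp: delta_def)
  then have "finite (delta r)" by (rule finite_subset) auto
  then show ?thesis unfolding is_partition_def delta_def by auto
qed

lemma partition_finite: "is_partition a \<Longrightarrow> finite a"
  unfolding is_partition_def by blast

lemma partition_downward_closed:
  "is_partition a \<Longrightarrow> (i, j) \<in> a \<Longrightarrow> i' \<le> i \<Longrightarrow> j' \<le> j \<Longrightarrow> (i', j') \<in> a"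
  unfolding is_partition_def by blast

lemma partition_downward_closed_Suc:
  assumes "is_partition a"
  shows "(Suc i, j) \<in> a \<Longrightarrow> (i, j) \<in> a" and "(i, Suc j) \<in> a \<Longrightarrow> (i, j) \<in> a"
  using partition_downward_closed[OF assms] by (meson le_Suc_eq order_refl)+

lemma is_partition_Int: "is_partition a \<Longrightarrow> is_partition b \<Longrightarrow> is_partition (a \<inter> b)"
  unfolding is_partition_def by blast

lemma is_partition_Un: "is_partition a \<Longrightarrow> is_partition b \<Longrightarrow> is_partition (a \<union> b)"
  unfolding is_partition_def by blast

lemma is_partition_insert_corner:
  assumes "is_partition a"
    and "\<And>i'. i = Suc i' \<Longrightarrow> (i', j) \<in> a" and "\<And>j'. j = Suc j' \<Longrightarrow> (i, j') \<in> a"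
  shows "is_partition (insert (i, j) a)"
  unfolding is_partition_def
proof (intro conjI allI impI)
  show "finite (insert (i, j) a)" using assms(1) by (simp add: partition_finite)
next
  fix x y x' y' assume xy: "(x, y) \<in> insert (i, j) a" and le: "x' \<le> x" "y' \<le> y"
  show "(x', y') \<in> insert (i, j) a"
  proof (cases "(x, y) \<in> a")
    case True
    then show ?thesis using partition_downward_closed[OF assms(1)] le by blast
  next
    case False
    with xy have "x = i" "y = j" by auto
    consider "x' < i" | "y' < j" | "x' = i" "y' = j" using le \<open>x = i\<close> \<open>y = j\<close> by linarith
    then show ?thesis
    proof cases
      case 1
      then obtain i' where "i = Suc i'" "x' \<le> i'" by (cases i) auto
      then show ?thesis using assms le \<open>y = j\<close> partition_downward_closed by blast
    next
      case 2
      then obtain j' where "j = Suc j'" "y' \<le> j'" by (cases j) auto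
      then show ?thesis using assms le \<open>x = i\<close> partition_downward_closed by blast
    qed simp
  qed
qed

lemma is_partition_Diff_corner:
  assumes "is_partition a" "(Suc i, j) \<notin> a" "(i, Suc j) \<notin> a"
  shows "is_partition (a - {(i, j)})"
  unfolding is_partition_def
proof (intro conjI allI impI)
  show "finite (a - {(i, j)})" using assms(1) by (simp add: partition_finite)
next
  fix x y x' y' assume xy: "(x, y) \<in> a - {(i, j)}" and le: "x' \<le> x" "y' \<le> y"
  have "(x', y') \<noteq> (i, j)"
  proof
    assume "(x', y') = (i, j)"
    with xy le have "i < x \<or> j < y" by auto
    then have "(Suc i, j) \<in> a \<or> (i, Suc j) \<in> a"
      using partition_downward_closed[OF assms(1)] xy le \<open>(x', y') = (i, j)\<close>
      by (metis DiffD1 Suc_leI prod.inject)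
    with assms show False by blast
  qed
  then show "(x', y') \<in> a - {(i, j)}" using xy le partition_downward_closed[OF assms(1)] by blast
qed

lemma partition_cell_bound:
  assumes "is_partition a" "(i, j) \<in> a"
  shows "i < card a" "j < card a"
proof -
  have fin: "finite a" using assms(1) by (rule partition_finite)
  have "(\<lambda>k. (k, 0)) ` {..i} \<subseteq> a" "(\<lambda>k. (0, k)) ` {..j} \<subseteq> a"
    using partition_downward_closed[OF assms] by auto
  then have "card ((\<lambda>k. (k, 0::nat)) ` {..i}) \<le> card a" "card ((\<lambda>k. (0::nat, k)) ` {..j}) \<le> card a"
    using fin card_mono by blast+
  then show "i < card a" "j < card a" by (simp_all add: card_image inj_on_def)
qed

lemma finite_partitions_of_card: "finite {a. is_partition a \<and> card a = N}"
proof (rule finite_subset)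
  show "{a. is_partition a \<and> card a = N} \<subseteq> Pow ({..<N} \<times> {..<N})"
    using partition_cell_bound by fastforce
qed simp

lemma vertical_domino_pair [simp]: "vertical_domino {(i, j), (Suc i, j)}"
  unfolding vertical_domino_def by blast

lemma horizontal_domino_pair [simp]: "horizontal_domino {(i, j), (i, Suc j)}"
  unfolding horizontal_domino_def by blast

lemma vertical_not_horizontal_domino: "vertical_domino S \<Longrightarrow> \<not> horizontal_domino S"
  unfolding vertical_domino_def horizontal_domino_def by (auto simp: doubleton_eq_iff)

lemma not_vertical_horizontal_pair [simp]: "\<not> vertical_domino {(i, j), (i, Suc j)}"
  using vertical_not_horizontal_domino horizontal_domino_pair by blast

lemma card_domino: "is_domino S \<Longrightarrow> card S = 2"
  unfolding is_domino_def vertical_domino_def horizontal_domino_def by auto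

lemma card_domino_step: "domino_step a b \<Longrightarrow> card b = card a + 2"
proof -
  assume "domino_step a b"
  then have "finite b" "a \<subseteq> b" "card (b - a) = 2"
    by (auto simp: domino_step_def partition_finite card_domino)
  then show ?thesis by (simp add: card_Diff_subset card_mono finite_subset)
qed

section \<open>Conjugation\<close>

definition conjugate :: "cell set \<Rightarrow> cell set" where
  "conjugate a = prod.swap ` a"

lemma mem_conjugate [simp]: "(i, j) \<in> conjugate a \<longleftrightarrow> (j, i) \<in> a"
  unfolding conjugate_def by (rule pair_in_swap_image)

lemma conjugate_conjugate [simp]: "conjugate (conjugate a) = a"
  unfolding conjugate_def by (simp add: image_image)

lemma conjugate_eq_iff [simp]: "conjugate a = conjugate b \<longleftrightarrow> a = b"
  by (metis conjugate_conjugate)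

lemma conjugate_Diff: "conjugate (a - b) = conjugate a - conjugate b"
  unfolding conjugate_def by (simp add: image_set_diff)

lemma conjugate_subset_iff [simp]: "conjugate a \<subseteq> conjugate b \<longleftrightarrow> a \<subseteq> b"
  unfolding conjugate_def by (simp add: inj_image_subset_iff)

lemma conjugate_doubleton [simp]: "conjugate {(i, j), (k, l)} = {(j, i), (l, k)}"
  unfolding conjugate_def by simp

lemma is_partition_conjugate_iff [simp]: "is_partition (conjugate a) \<longleftrightarrow> is_partition a"
proof -
  have "is_partition (conjugate a)" if "is_partition a" for a
    using that unfolding is_partition_def conjugate_def by auto
  from this[of a] this[of "conjugate a"] show ?thesis by auto
qed

lemma vertical_domino_conjugate_iff [simp]: "vertical_domino (conjugate S) \<longleftrightarrow> horizontal_domino S"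
  unfolding vertical_domino_def horizontal_domino_def
  by (metis conjugate_conjugate conjugate_doubleton)

lemma horizontal_domino_conjugate_iff [simp]: "horizontal_domino (conjugate S) \<longleftrightarrow> vertical_domino S"
  using vertical_domino_conjugate_iff[of "conjugate S"] by simp

lemma domino_step_conjugate_iff [simp]: "domino_step (conjugate a) (conjugate b) \<longleftrightarrow> domino_step a b"
  unfolding domino_step_def is_domino_def conjugate_Diff[symmetric] by auto

section \<open>Addable and removable dominoes\<close>

definition row_len :: "cell set \<Rightarrow> nat \<Rightarrow> nat" where
  "row_len a i = card {j. (i, j) \<in> a}"

lemma downward_closed_nat_eq_lessThan:
  fixes S :: "nat set"
  assumes "finite S" "\<And>j j'. j \<in> S \<Longrightarrow> j' \<le> j \<Longrightarrow> j' \<in> S"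
  shows "S = {..<card S}"
proof (cases "S = {}")
  case False
  then have "S = {..Max S}" using assms by (auto intro: Max_in)
  then show ?thesis by (metis card_atMost lessThan_Suc_atMost)
qed simp

lemma mem_partition_iff_row_len:
  assumes "is_partition a"
  shows "(i, j) \<in> a \<longleftrightarrow> j < row_len a i"
proof -
  have "{j. (i, j) \<in> a} \<subseteq> snd ` a" by force
  then have "finite {j. (i, j) \<in> a}"
    using assms finite_subset partition_finite by blast
  then have "{j. (i, j) \<in> a} = {..<row_len a i}"
    unfolding row_len_def
    by (rule downward_closed_nat_eq_lessThan) (auto intro: partition_downward_closed[OF assms])
  then show ?thesis by blast
qed

lemma row_len_eq_0:
  assumes "is_partition a" "card a \<le> i"
  shows "row_len a i = 0"
  using partition_cell_bound(1)[OF assms(1), of i 0] assms mem_partition_iff_row_len by fastforce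

definition domino_ups :: "cell set \<Rightarrow> cell set set" where
  "domino_ups a = {m. domino_step a m}"

definition domino_downs :: "cell set \<Rightarrow> cell set set" where
  "domino_downs m = {l. domino_step l m}"

definition horizontal_ups :: "cell set \<Rightarrow> cell set set" where
  "horizontal_ups a = {m \<in> domino_ups a. horizontal_domino (m - a)}"

definition horizontal_downs :: "cell set \<Rightarrow> cell set set" where
  "horizontal_downs m = {l \<in> domino_downs m. horizontal_domino (m - l)}"

definition vertical_ups :: "cell set \<Rightarrow> cell set set" where
  "vertical_ups a = {m \<in> domino_ups a. vertical_domino (m - a)}"

definition vertical_downs :: "cell set \<Rightarrow> cell set set" where
  "vertical_downs m = {l \<in> domino_downs m. vertical_domino (m - l)}"

lemma mem_domino_ups_iff [simp]: "m \<in> domino_ups a \<longleftrightarrow> domino_step a m"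
  by (simp add: domino_ups_def)

lemma mem_domino_downs_iff [simp]: "l \<in> domino_downs m \<longleftrightarrow> domino_step l m"
  by (simp add: domino_downs_def)

lemma finite_domino_downs: "finite (domino_downs m)"
proof (cases "domino_downs m = {}")
  case False
  then have "finite m"
    by (auto simp: domino_downs_def domino_step_def partition_finite)
  moreover have "domino_downs m \<subseteq> Pow m"
    by (auto simp: domino_downs_def domino_step_def)
  ultimately show ?thesis using finite_subset by blast
qed simp

lemma finite_domino_ups: "finite (domino_ups a)"
proof (rule finite_subset)
  show "domino_ups a \<subseteq> {m. is_partition m \<and> card m = card a + 2}"
    using card_domino_step by (auto simp: domino_ups_def domino_step_def)
qed (rule finite_partitions_of_card)

lemma horizontal_upsE:
  assumes a: "is_partition a" and "m \<in> horizontal_ups a"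
  obtains i where "i = 0 \<or> row_len a i + 2 \<le> row_len a (i - 1)"
    and "m = a \<union> {(i, row_len a i), (i, Suc (row_len a i))}"
proof -
  from assms(2) obtain i j where "domino_step a m" and d: "m - a = {(i, j), (i, Suc j)}"
    by (auto simp: horizontal_ups_def horizontal_domino_def)
  then have m: "is_partition m" "m = a \<union> {(i, j), (i, Suc j)}"
    by (auto simp: domino_step_def)
  have "(i, j) \<notin> a" using d by blast
  then have "row_len a i \<le> j" using mem_partition_iff_row_len[OF a] by simp
  moreover have "\<not> row_len a i < j"
  proof
    assume "row_len a i < j"
    moreover have "(i, j) \<in> m" using m(2) by blast
    ultimately have "(i, row_len a i) \<in> m"
      using partition_downward_closed[OF m(1)] by simp
    with \<open>row_len a i < j\<close> show False using m mem_partition_iff_row_len[OF a] by auto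
  qed
  ultimately have j: "j = row_len a i" by simp
  have "row_len a i + 2 \<le> row_len a (i - 1)" if "i = Suc i'" for i'
  proof -
    have "(Suc i', Suc j) \<in> m" using m(2) that by blast
    then have "(i', Suc j) \<in> m" by (rule partition_downward_closed_Suc(1)[OF m(1)])
    then have "(i', Suc j) \<in> a" using m(2) that by auto
    then show ?thesis using mem_partition_iff_row_len[OF a] that j by simp
  qed
  then have "i = 0 \<or> row_len a i + 2 \<le> row_len a (i - 1)" by (cases i) auto
  with m(2) j show thesis by (intro that[of i]) simp_all
qed

lemma row_end_mem_horizontal_ups:
  assumes a: "is_partition a" and i: "i = 0 \<or> row_len a i + 2 \<le> row_len a (i - 1)"
  shows "a \<union> {(i, row_len a i), (i, Suc (row_len a i))} \<in> horizontal_ups a"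
proof -
  define m where "m = insert (i, Suc (row_len a i)) (insert (i, row_len a i) a)"
  have above: "(i', row_len a i) \<in> a" "(i', Suc (row_len a i)) \<in> a" if "i = Suc i'" for i'
    using i that by (simp_all add: mem_partition_iff_row_len[OF a])
  have "is_partition (insert (i, row_len a i) a)"
  proof (rule is_partition_insert_corner[OF a])
    show "(i, j') \<in> a" if "row_len a i = Suc j'" for j'
      using that by (simp add: mem_partition_iff_row_len[OF a])
  qed (rule above(1))
  then have "is_partition m"
    unfolding m_def by (rule is_partition_insert_corner) (use above(2) in auto)
  moreover have "m - a = {(i, row_len a i), (i, Suc (row_len a i))}"
    using mem_partition_iff_row_len[OF a] by (auto simp: m_def)
  ultimately have "m \<in> horizontal_ups a"
    using a by (auto simp: horizontal_ups_def domino_step_def is_domino_def m_def)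
  then show ?thesis by (simp add: m_def insert_commute)
qed

lemma horizontal_ups_eq:
  assumes "is_partition a"
  shows "horizontal_ups a = (\<lambda>i. a \<union> {(i, row_len a i), (i, Suc (row_len a i))}) `
    {i. i = 0 \<or> row_len a i + 2 \<le> row_len a (i - 1)}"
  using horizontal_upsE[OF assms] row_end_mem_horizontal_ups[OF assms] by blast

lemma horizontal_downsE:
  assumes a: "is_partition a" and "l \<in> horizontal_downs a"
  obtains i where "row_len a (Suc i) + 2 \<le> row_len a i"
    and "l = a - {(i, row_len a i - 2), (i, row_len a i - 1)}"
proof -
  from assms(2) obtain i j where "domino_step l a" and d: "a - l = {(i, j), (i, Suc j)}"
    by (auto simp: horizontal_downs_def horizontal_domino_def)
  then have l: "is_partition l" "l = a - {(i, j), (i, Suc j)}"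
    by (auto simp: domino_step_def)
  have "(i, Suc j) \<in> a" using d by blast
  then have "Suc j < row_len a i" using mem_partition_iff_row_len[OF a] by simp
  moreover have "\<not> Suc (Suc j) < row_len a i"
  proof
    assume "Suc (Suc j) < row_len a i"
    then have "(i, Suc (Suc j)) \<in> l" using l(2) mem_partition_iff_row_len[OF a] by simp
    then have "(i, Suc j) \<in> l" by (rule partition_downward_closed_Suc(2)[OF l(1)])
    then show False using l(2) by blast
  qed
  ultimately have j: "row_len a i = Suc (Suc j)" by simp
  have "(Suc i, j) \<notin> l"
    using partition_downward_closed_Suc(1)[OF l(1), of i j] l(2) by blast
  then have "row_len a (Suc i) \<le> j" using l(2) mem_partition_iff_row_len[OF a] by auto
  with l(2) j show thesis by (intro that[of i]) simp_all
qed

lemma row_end_mem_horizontal_downs: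
  assumes a: "is_partition a" and i: "row_len a (Suc i) + 2 \<le> row_len a i"
  shows "a - {(i, row_len a i - 2), (i, row_len a i - 1)} \<in> horizontal_downs a"
proof -
  define j where "j = row_len a i - 2"
  have j: "row_len a i = Suc (Suc j)" using i by (simp add: j_def)
  define l where "l = a - {(i, Suc j)} - {(i, j)}"
  have "is_partition (a - {(i, Suc j)})"
    using i j by (intro is_partition_Diff_corner[OF a]) (simp_all add: mem_partition_iff_row_len[OF a])
  then have "is_partition l"
    unfolding l_def using i j
    by (intro is_partition_Diff_corner[OF \<open>is_partition (a - {(i, Suc j)})\<close>])
      (simp_all add: mem_partition_iff_row_len[OF a])
  moreover have "a - l = {(i, j), (i, Suc j)}"
    using j mem_partition_iff_row_len[OF a] by (auto simp: l_def)
  ultimately have "l \<in> horizontal_downs a"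
    using a by (auto simp: horizontal_downs_def domino_step_def is_domino_def l_def)
  moreover have "l = a - {(i, row_len a i - 2), (i, row_len a i - 1)}"
    using j by (auto simp: l_def)
  ultimately show ?thesis by simp
qed

lemma horizontal_downs_eq:
  assumes "is_partition a"
  shows "horizontal_downs a = (\<lambda>i. a - {(i, row_len a i - 2), (i, row_len a i - 1)}) `
    {i. row_len a (Suc i) + 2 \<le> row_len a i}"
  using horizontal_downsE[OF assms] row_end_mem_horizontal_downs[OF assms] by blast

text \<open>Removable rows \<open>i\<close> correspond to addable rows \<open>i + 1\<close>; row 0 is always addable.\<close>

lemma card_horizontal_ups:
  assumes a: "is_partition a"
  shows "card (horizontal_ups a) = Suc (card (horizontal_downs a))"
proof -
  let ?R = "{i. row_len a (Suc i) + 2 \<le> row_len a i}"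
  have "?R \<subseteq> {..<card a}"
  proof
    fix i assume "i \<in> ?R"
    then have "row_len a i \<noteq> 0" by simp
    then show "i \<in> {..<card a}" using row_len_eq_0[OF a] by (meson lessThan_iff not_le)
  qed
  then have "finite ?R" by (rule finite_subset) simp
  have add_rows: "{i. i = 0 \<or> row_len a i + 2 \<le> row_len a (i - 1)} = insert 0 (Suc ` ?R)"
  proof (rule set_eqI)
    show "i \<in> {i. i = 0 \<or> row_len a i + 2 \<le> row_len a (i - 1)} \<longleftrightarrow> i \<in> insert 0 (Suc ` ?R)" for i
      by (cases i) auto
  qed
  have "inj_on (\<lambda>i. a \<union> {(i, row_len a i), (i, Suc (row_len a i))}) X" for X
  proof (rule inj_onI)
    fix i i' assume "a \<union> {(i, row_len a i), (i, Suc (row_len a i))}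
      = a \<union> {(i', row_len a i'), (i', Suc (row_len a i'))}"
    moreover have "(i, row_len a i) \<notin> a" using mem_partition_iff_row_len[OF a] by simp
    ultimately show "i = i'" by blast
  qed
  then have "card (horizontal_ups a) = card (insert 0 (Suc ` ?R))"
    unfolding horizontal_ups_eq[OF a] add_rows by (rule card_image)
  also have "\<dots> = Suc (card ?R)" using \<open>finite ?R\<close> by (simp add: card_image)
  also have "inj_on (\<lambda>i. a - {(i, row_len a i - 2), (i, row_len a i - 1)}) ?R"
  proof (rule inj_onI)
    fix i i' assume "i \<in> ?R" and "a - {(i, row_len a i - 2), (i, row_len a i - 1)}
      = a - {(i', row_len a i' - 2), (i', row_len a i' - 1)}"
    moreover have "(i, row_len a i - 1) \<in> a"
      using \<open>i \<in> ?R\<close> mem_partition_iff_row_len[OF a] by simp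
    ultimately show "i = i'" by blast
  qed
  then have "card ?R = card (horizontal_downs a)"
    unfolding horizontal_downs_eq[OF a] by (rule card_image[symmetric])
  finally show ?thesis .
qed

lemma image_conjugate_eq: "conjugate ` A = {x. conjugate x \<in> A}"
  by (auto simp: image_iff) (metis conjugate_conjugate)

lemma vertical_ups_conjugate: "vertical_ups a = conjugate ` horizontal_ups (conjugate a)"
  unfolding image_conjugate_eq vertical_ups_def horizontal_ups_def domino_ups_def
  by (auto simp: conjugate_Diff[symmetric])

lemma vertical_downs_conjugate: "vertical_downs a = conjugate ` horizontal_downs (conjugate a)"
  unfolding image_conjugate_eq vertical_downs_def horizontal_downs_def domino_downs_def
  by (auto simp: conjugate_Diff[symmetric])

lemma card_vertical_ups:
  assumes "is_partition a"
  shows "card (vertical_ups a) = Suc (card (vertical_downs a))"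
proof -
  have "inj_on conjugate X" for X by (rule inj_onI) simp
  then show ?thesis
    using card_horizontal_ups[of "conjugate a"] assms
    by (simp add: vertical_ups_conjugate vertical_downs_conjugate card_image)
qed

definition domino_weight :: "real \<Rightarrow> cell set \<Rightarrow> cell set \<Rightarrow> real" where
  "domino_weight q l m = (if vertical_domino (m - l) then sqrt q else 1)"

lemma domino_weight_sq: "0 \<le> q \<Longrightarrow> (domino_weight q l m)\<^sup>2 = (if vertical_domino (m - l) then q else 1)"
  by (simp add: domino_weight_def)

lemma sum_domino_weight_sq_ups:
  assumes "0 \<le> q"
  shows "(\<Sum>m\<in>domino_ups a. (domino_weight q a m)\<^sup>2) =
    real (card (vertical_ups a)) * q + real (card (horizontal_ups a))"
proof -
  have "domino_ups a \<inter> {m. vertical_domino (m - a)} = vertical_ups a"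
    by (auto simp: vertical_ups_def)
  moreover have "domino_ups a \<inter> - {m. vertical_domino (m - a)} = horizontal_ups a"
    by (auto simp: horizontal_ups_def domino_ups_def domino_step_def is_domino_def
        dest: vertical_not_horizontal_domino)
  ultimately show ?thesis
    using assms by (simp add: domino_weight_sq sum.If_cases finite_domino_ups)
qed

lemma sum_domino_weight_sq_downs:
  assumes "0 \<le> q"
  shows "(\<Sum>l\<in>domino_downs m. (domino_weight q l m)\<^sup>2) =
    real (card (vertical_downs m)) * q + real (card (horizontal_downs m))"
proof -
  have "domino_downs m \<inter> {l. vertical_domino (m - l)} = vertical_downs m"
    by (auto simp: vertical_downs_def)
  moreover have "domino_downs m \<inter> - {l. vertical_domino (m - l)} = horizontal_downs m"
    by (auto simp: horizontal_downs_def domino_downs_def domino_step_def is_domino_def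
        dest: vertical_not_horizontal_domino)
  ultimately show ?thesis
    using assms by (simp add: domino_weight_sq sum.If_cases finite_domino_downs)
qed

lemma sum_domino_weight_sq_ups_downs:
  assumes "is_partition a" "0 \<le> q"
  shows "(\<Sum>m\<in>domino_ups a. (domino_weight q a m)\<^sup>2) = (\<Sum>l\<in>domino_downs a. (domino_weight q l a)\<^sup>2) + 1 + q"
  unfolding sum_domino_weight_sq_ups[OF assms(2)] sum_domino_weight_sq_downs[OF assms(2)]
    card_vertical_ups[OF assms(1)] card_horizontal_ups[OF assms(1)]
  by (simp add: algebra_simps)

section \<open>Standard domino tableaux as weighted paths\<close>

lemma sdt_0: "sdt r 0 l = (if l = delta r then {[delta r]} else {})"
proof -
  have "D \<in> sdt r 0 l \<longleftrightarrow> D = [delta r] \<and> l = delta r" for D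
    unfolding sdt_def by (cases D) auto
  then show ?thesis by auto
qed

lemma sdt_Suc: "sdt r (Suc k) m = (\<Union>l\<in>domino_downs m. (\<lambda>D. D @ [m]) ` sdt r k l)"
proof (intro equalityI subsetI)
  fix D assume D: "D \<in> sdt r (Suc k) m"
  then have len: "length D = Suc (Suc k)" and last: "D ! Suc k = m"
    by (auto simp: sdt_def)
  then have D_eq: "D = take (Suc k) D @ [m]"
    using take_Suc_conv_app_nth[of "Suc k" D] by simp
  have "take (Suc k) D \<in> sdt r k (D ! k)" "D ! k \<in> domino_downs m"
    using D len last by (auto simp: sdt_def domino_downs_def)
  then show "D \<in> (\<Union>l\<in>domino_downs m. (\<lambda>D. D @ [m]) ` sdt r k l)"
    using D_eq by blast
next
  fix D' assume "D' \<in> (\<Union>l\<in>domino_downs m. (\<lambda>D. D @ [m]) ` sdt r k l)"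
  then obtain l D where l: "domino_step l m" and D: "D \<in> sdt r k l" and D': "D' = D @ [m]"
    by (auto simp: domino_downs_def)
  have "domino_step ((D @ [m]) ! i) ((D @ [m]) ! Suc i)" if "i < Suc k" for i
    using that l D by (cases "i = k") (auto simp: sdt_def nth_append)
  then show "D' \<in> sdt r (Suc k) m"
    using D D' by (auto simp: sdt_def nth_append)
qed

lemma finite_sdt: "finite (sdt r k l)"
proof (induction k arbitrary: l)
  case (Suc k)
  then show ?case by (simp add: sdt_Suc finite_domino_downs)
qed (simp add: sdt_0)

lemma num_vertical_snoc:
  assumes "D \<noteq> []"
  shows "num_vertical (D @ [m]) = num_vertical D + (if vertical_domino (m - last D) then 1 else 0)"
proof -
  let ?V = "\<lambda>D. {k. Suc k < length D \<and> vertical_domino (D ! Suc k - D ! k)}"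
  have "k \<in> ?V (D @ [m]) \<longleftrightarrow> k \<in> ?V D \<union> (if vertical_domino (m - last D) then {length D - 1} else {})"
    for k
  proof (cases "Suc k < length D")
    case False
    have "D ! k = last D" if "Suc k = length D"
      using that assms by (simp add: last_conv_nth flip: that)
    with False assms show ?thesis by (auto simp: nth_append)
  qed (auto simp: nth_append)
  then have "?V (D @ [m]) = ?V D \<union> (if vertical_domino (m - last D) then {length D - 1} else {})"
    by blast
  moreover have "finite (?V D)" "length D - 1 \<notin> ?V D"
    using assms by (auto intro: finite_subset[of _ "{..<length D}"])
  ultimately show ?thesis unfolding num_vertical_def by simp
qed

lemma dpoly_0: "0 < q \<Longrightarrow> dpoly r 0 l q = (if l = delta r then 1 else 0)"
  by (simp add: dpoly_def sdt_0 spin_def num_vertical_def)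

lemma dpoly_Suc:
  assumes "0 < q"
  shows "dpoly r (Suc k) m q = (\<Sum>l\<in>domino_downs m. domino_weight q l m * dpoly r k l q)"
proof -
  have spin_snoc: "q powr spin (D @ [m]) = domino_weight q l m * q powr spin D"
    if "D \<in> sdt r k l" for l D
  proof -
    from that have "D \<noteq> []" by (auto simp: sdt_def)
    moreover from that this have "last D = l" by (simp add: sdt_def last_conv_nth)
    ultimately show ?thesis
      using assms by (simp add: num_vertical_snoc spin_def domino_weight_def powr_add
          add_divide_distrib powr_half_sqrt)
  qed
  have "dpoly r (Suc k) m q = (\<Sum>l\<in>domino_downs m. \<Sum>D\<in>(\<lambda>D. D @ [m]) ` sdt r k l. q powr spin D)"
    unfolding dpoly_def sdt_Suc
    by (rule sum.UNION_disjoint) (simp_all add: finite_domino_downs finite_sdt, auto simp: sdt_def)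
  also have "\<dots> = (\<Sum>l\<in>domino_downs m. \<Sum>D\<in>sdt r k l. q powr spin (D @ [m]))"
    by (rule sum.cong[OF refl], subst sum.reindex) (auto simp: inj_on_def)
  also have "\<dots> = (\<Sum>l\<in>domino_downs m. domino_weight q l m * dpoly r k l q)"
    by (simp add: spin_snoc dpoly_def sum_distrib_left)
  finally show ?thesis .
qed

lemma domino_step_mem_P: "l \<in> P r n \<Longrightarrow> domino_step l m \<Longrightarrow> m \<in> P r (Suc n)"
  unfolding P_def has_2core_def
  by (auto simp: card_domino_step domino_step_def intro: rtranclp.rtrancl_into_rtrancl)

lemma sdt_shape_mem_P: "D \<in> sdt r k l \<Longrightarrow> l \<in> P r k"
proof (induction k arbitrary: D l)
  case 0
  then show ?case using is_partition_delta by (simp add: sdt_0 P_def has_2core_def split: if_splits)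
next
  case (Suc k)
  then show ?case by (auto simp: sdt_Suc domino_downs_def intro: domino_step_mem_P)
qed

lemma dpoly_eq_0_if_not_mem_P: "l \<notin> P r k \<Longrightarrow> dpoly r k l q = 0"
  unfolding dpoly_def using sdt_shape_mem_P by (metis sum.neutral)

lemma finite_P: "finite (P r n)"
  by (rule finite_subset[OF _ finite_partitions_of_card[of "card (delta r) + 2 * n"]]) (auto simp: P_def)

section \<open>Completing diamonds\<close>

lemma domino_step_Diff_upward:
  assumes "domino_step l m" "(i, j) \<in> m - l" "(i', j') \<in> m" "i \<le> i'" "j \<le> j'"
  shows "(i', j') \<in> m - l"
  using assms partition_downward_closed[of l i' j' i j] by (auto simp: domino_step_def)

lemma domino_step_Diff_downward:
  assumes "domino_step n l" "(i, j) \<in> l - n" "(i', j') \<notin> n" "i' \<le> i" "j' \<le> j"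
  shows "(i', j') \<in> l - n"
  using assms partition_downward_closed[of l i j i' j'] by (auto simp: domino_step_def)

lemma overlapping_vertical_downs_eq:
  assumes l: "domino_step l m" "vertical_domino (m - l)" and p: "domino_step p m" "vertical_domino (m - p)"
    and overlap: "(m - l) \<inter> (m - p) \<noteq> {}"
  shows "l = p"
proof -
  obtain a b c e where dl: "m - l = {(a, b), (Suc a, b)}" and dp: "m - p = {(c, e), (Suc c, e)}"
    using l(2) p(2) by (auto simp: vertical_domino_def)
  have cells: "(Suc a, b) \<in> m" "(Suc c, e) \<in> m" using dl dp by blast+
  have "a \<noteq> Suc c"
    using domino_step_Diff_upward[OF p(1), of c e "Suc a" b] dl dp overlap cells by auto
  moreover have "c \<noteq> Suc a"
    using domino_step_Diff_upward[OF l(1), of a b "Suc c" e] dl dp overlap cells by auto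
  ultimately have "m - l = m - p" using overlap dl dp by auto
  then show "l = p" using l(1) p(1) by (auto simp: domino_step_def)
qed

lemma overlapping_horizontal_downs_eq:
  assumes "domino_step l m" "horizontal_domino (m - l)" "domino_step p m" "horizontal_domino (m - p)"
    and "(m - l) \<inter> (m - p) \<noteq> {}"
  shows "l = p"
proof -
  have "(conjugate m - conjugate l) \<inter> (conjugate m - conjugate p) \<noteq> {}"
    using assms(5) by (auto simp: conjugate_def)
  moreover have "vertical_domino (conjugate m - conjugate l)" "vertical_domino (conjugate m - conjugate p)"
    using assms by (simp_all flip: conjugate_Diff)
  ultimately have "conjugate l = conjugate p"
    using assms by (intro overlapping_vertical_downs_eq) simp_all
  then show "l = p" by simp
qed

lemma overlapping_vertical_ups_eq:
  assumes l: "domino_step n l" "vertical_domino (l - n)" and p: "domino_step n p" "vertical_domino (p - n)"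
    and overlap: "(l - n) \<inter> (p - n) \<noteq> {}"
  shows "l = p"
proof -
  obtain a b c e where dl: "l - n = {(a, b), (Suc a, b)}" and dp: "p - n = {(c, e), (Suc c, e)}"
    using l(2) p(2) by (auto simp: vertical_domino_def)
  have cells: "(a, b) \<notin> n" "(c, e) \<notin> n" using dl dp by blast+
  have "a \<noteq> Suc c"
    using domino_step_Diff_downward[OF l(1), of a b c e] dl dp overlap cells by auto
  moreover have "c \<noteq> Suc a"
    using domino_step_Diff_downward[OF p(1), of c e a b] dl dp overlap cells by auto
  ultimately have "l - n = p - n" using overlap dl dp by auto
  then show "l = p" using l(1) p(1) by (auto simp: domino_step_def)
qed

lemma overlapping_horizontal_ups_eq:
  assumes "domino_step n l" "horizontal_domino (l - n)" "domino_step n p" "horizontal_domino (p - n)"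
    and "(l - n) \<inter> (p - n) \<noteq> {}"
  shows "l = p"
proof -
  have "(conjugate l - conjugate n) \<inter> (conjugate p - conjugate n) \<noteq> {}"
    using assms(5) by (auto simp: conjugate_def)
  moreover have "vertical_domino (conjugate l - conjugate n)" "vertical_domino (conjugate p - conjugate n)"
    using assms by (simp_all flip: conjugate_Diff)
  ultimately have "conjugate l = conjugate p"
    using assms by (intro overlapping_vertical_ups_eq) simp_all
  then show "l = p" by simp
qed

lemma overlapping_downsE:
  assumes l: "domino_step l m" "vertical_domino (m - l)" and p: "domino_step p m"
    and "l \<noteq> p" and overlap: "(m - l) \<inter> (m - p) \<noteq> {}"
  obtains i j where "m - l = {(i, Suc j), (Suc i, Suc j)}" and "m - p = {(Suc i, j), (Suc i, Suc j)}"
proof -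
  have "horizontal_domino (m - p)"
    using overlapping_vertical_downs_eq[OF l p _ overlap] \<open>l \<noteq> p\<close> p
    by (auto simp: domino_step_def is_domino_def)
  then obtain a b c e where dl: "m - l = {(a, b), (Suc a, b)}" and dp: "m - p = {(c, e), (c, Suc e)}"
    using l(2) by (auto simp: vertical_domino_def horizontal_domino_def)
  have cells: "(Suc a, b) \<in> m" "(c, Suc e) \<in> m" using dl dp by blast+
  from overlap dl dp
  have "(a, b) = (c, e) \<or> (a, b) = (c, Suc e) \<or> (Suc a, b) = (c, e) \<or> (Suc a, b) = (c, Suc e)"
    by auto
  then have "c = Suc a \<and> b = Suc e"
  proof (elim disjE)
    assume "(a, b) = (c, e)"
    then show ?thesis using domino_step_Diff_upward[OF p(1), of c e "Suc a" b] dp cells by simp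
  next
    assume "(a, b) = (c, Suc e)"
    then show ?thesis using domino_step_Diff_upward[OF p(1), of c e "Suc a" b] dp cells by simp
  next
    assume "(Suc a, b) = (c, e)"
    then show ?thesis using domino_step_Diff_upward[OF l(1), of a b c "Suc e"] dl cells by simp
  qed simp
  with dl dp show thesis by (intro that[of a e]) simp_all
qed

lemma overlapping_upsE:
  assumes l: "domino_step n l" "vertical_domino (l - n)" and p: "domino_step n p"
    and "l \<noteq> p" and overlap: "(l - n) \<inter> (p - n) \<noteq> {}"
  obtains i j where "l - n = {(i, j), (Suc i, j)}" and "p - n = {(i, j), (i, Suc j)}"
proof -
  have "horizontal_domino (p - n)"
    using overlapping_vertical_ups_eq[OF l p _ overlap] \<open>l \<noteq> p\<close> p
    by (auto simp: domino_step_def is_domino_def)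
  then obtain a b c e where dl: "l - n = {(a, b), (Suc a, b)}" and dp: "p - n = {(c, e), (c, Suc e)}"
    using l(2) by (auto simp: vertical_domino_def horizontal_domino_def)
  have cells: "(a, b) \<notin> n" "(c, e) \<notin> n" using dl dp by blast+
  from overlap dl dp
  have "(a, b) = (c, e) \<or> (a, b) = (c, Suc e) \<or> (Suc a, b) = (c, e) \<or> (Suc a, b) = (c, Suc e)"
    by auto
  then have "c = a \<and> e = b"
  proof (elim disjE)
    assume "(a, b) = (c, Suc e)"
    then show ?thesis using domino_step_Diff_downward[OF l(1), of a b c e] dl cells by simp
  next
    assume "(Suc a, b) = (c, e)"
    then show ?thesis using domino_step_Diff_downward[OF p(1), of c e a b] dp cells by simp
  next
    assume "(Suc a, b) = (c, Suc e)"
    then show ?thesis using domino_step_Diff_downward[OF p(1), of c "Suc e" a b] dp cells by simp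
  qed simp
  with dl dp show thesis by (intro that[of a b]) simp_all
qed

text \<open>
  If the dominoes \<open>m - l\<close> and \<open>m - p\<close> are disjoint, the diamond closes with \<open>l \<inter> p\<close> below and
  \<open>l \<union> p\<close> above. If they overlap, they cover a \<open>2 \<times> 2\<close> square except its top-left cell, and the
  bottom removes that cell as well; dually, two overlapping dominoes added to \<open>n\<close> are closed above
  by the cell diagonally below-right of their common cell. The diagonal shift \<open>map_prod Suc Suc\<close>
  locates that cell, and in the disjoint case it finds nothing.
\<close>

definition diamond_bottom :: "cell set \<Rightarrow> cell set \<Rightarrow> cell set \<Rightarrow> cell set" where
  "diamond_bottom l p m = (l \<inter> p) - map_prod Suc Suc -` (m - (l \<union> p))"

definition diamond_top :: "cell set \<Rightarrow> cell set \<Rightarrow> cell set \<Rightarrow> cell set" where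
  "diamond_top l p n = l \<union> p \<union> map_prod Suc Suc ` (l \<inter> p - n)"

lemma diamond_bottom_commute: "diamond_bottom l p m = diamond_bottom p l m"
  unfolding diamond_bottom_def by (simp add: Int_commute Un_commute)

lemma diamond_top_commute: "diamond_top l p n = diamond_top p l n"
  unfolding diamond_top_def by (simp add: Int_commute Un_commute)

lemma diamond_below_disjoint:
  assumes l: "domino_step l m" and p: "domino_step p m" and disj: "(m - l) \<inter> (m - p) = {}"
  shows "domino_step (diamond_bottom l p m) l \<and> domino_step (diamond_bottom l p m) p \<and>
    diamond_top l p (diamond_bottom l p m) = m \<and>
    domino_weight q (diamond_bottom l p m) l * domino_weight q (diamond_bottom l p m) p =
    domino_weight q l m * domino_weight q p m"
proof -
  have m: "m = l \<union> p" using l p disj by (auto simp: domino_step_def)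
  have bottom: "diamond_bottom l p m = l \<inter> p" unfolding diamond_bottom_def m by simp
  have "l - l \<inter> p = m - p" "p - l \<inter> p = m - l" using m by auto
  moreover have "is_partition (l \<inter> p)"
    using l p by (auto simp: domino_step_def intro: is_partition_Int)
  ultimately show ?thesis
    using l p unfolding bottom by (auto simp: domino_step_def diamond_top_def domino_weight_def m)
qed

lemma diamond_below_overlap:
  assumes l: "domino_step l m" "vertical_domino (m - l)" and p: "domino_step p m"
    and "l \<noteq> p" and "(m - l) \<inter> (m - p) \<noteq> {}"
  shows "domino_step (diamond_bottom l p m) l \<and> domino_step (diamond_bottom l p m) p \<and>
    diamond_top l p (diamond_bottom l p m) = m \<and>
    domino_weight q (diamond_bottom l p m) l * domino_weight q (diamond_bottom l p m) p =
    domino_weight q l m * domino_weight q p m"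
proof -
  obtain i j where dl: "m - l = {(i, Suc j), (Suc i, Suc j)}" and dp: "m - p = {(Suc i, j), (Suc i, Suc j)}"
    using overlapping_downsE[OF assms] .
  have pm: "is_partition m" and pl: "is_partition l" and pp: "is_partition p"
    using l p by (auto simp: domino_step_def)
  have leq: "l = m - {(i, Suc j), (Suc i, Suc j)}" and peq: "p = m - {(Suc i, j), (Suc i, Suc j)}"
    using dl dp l(1) p(1) by (auto simp: domino_step_def)
  have mem: "(i, Suc j) \<in> m" "(Suc i, j) \<in> m" "(Suc i, Suc j) \<in> m" using dl dp by blast+
  then have mem': "(i, j) \<in> m" using partition_downward_closed_Suc(2)[OF pm] by blast
  define n where "n = l \<inter> p - {(i, j)}"
  have "m - (l \<union> p) = {(Suc i, Suc j)}" unfolding leq peq using mem by auto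
  moreover have "map_prod Suc Suc -` {(Suc i, Suc j)} = {(i, j)}" by auto
  ultimately have bottom: "diamond_bottom l p m = n"
    unfolding diamond_bottom_def n_def by simp
  have "is_partition n"
    unfolding n_def by (intro is_partition_Diff_corner is_partition_Int pl pp) (simp_all add: leq peq)
  moreover have "l - n = {(i, j), (Suc i, j)}" "p - n = {(i, j), (i, Suc j)}"
    unfolding n_def leq peq using mem mem' by auto
  moreover have "diamond_top l p n = m"
  proof -
    have "l \<inter> p - n = {(i, j)}" unfolding n_def leq peq using mem' by auto
    then show ?thesis unfolding diamond_top_def leq peq using mem by auto
  qed
  moreover have "n \<subseteq> l" "n \<subseteq> p" by (auto simp: n_def)
  ultimately show ?thesis
    unfolding bottom using pl pp dl dp
    by (simp add: domino_step_def is_domino_def domino_weight_def vertical_not_horizontal_domino)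
qed

lemma diamond_above_disjoint:
  assumes l: "domino_step n l" and p: "domino_step n p" and disj: "(l - n) \<inter> (p - n) = {}"
  shows "domino_step l (diamond_top l p n) \<and> domino_step p (diamond_top l p n) \<and>
    diamond_bottom l p (diamond_top l p n) = n"
proof -
  have n: "n = l \<inter> p" using l p disj by (auto simp: domino_step_def)
  have top: "diamond_top l p n = l \<union> p" unfolding diamond_top_def n by simp
  have "l \<union> p - l = p - n" "l \<union> p - p = l - n" using n by auto
  moreover have "is_partition (l \<union> p)"
    using l p by (auto simp: domino_step_def intro: is_partition_Un)
  ultimately show ?thesis
    using l p unfolding top by (auto simp: domino_step_def diamond_bottom_def n)
qed

lemma diamond_above_overlap:
  assumes l: "domino_step n l" "vertical_domino (l - n)" and p: "domino_step n p"
    and "l \<noteq> p" and "(l - n) \<inter> (p - n) \<noteq> {}"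
  shows "domino_step l (diamond_top l p n) \<and> domino_step p (diamond_top l p n) \<and>
    diamond_bottom l p (diamond_top l p n) = n"
proof -
  obtain i j where dl: "l - n = {(i, j), (Suc i, j)}" and dp: "p - n = {(i, j), (i, Suc j)}"
    using overlapping_upsE[OF assms] .
  have pn: "is_partition n" and pl: "is_partition l" and pp: "is_partition p"
    using l p by (auto simp: domino_step_def)
  have "l = n \<union> (l - n)" "p = n \<union> (p - n)" using l(1) p(1) by (auto simp: domino_step_def)
  then have leq: "l = n \<union> {(i, j), (Suc i, j)}" and peq: "p = n \<union> {(i, j), (i, Suc j)}"
    by (simp_all only: dl dp)
  have out: "(i, j) \<notin> n" "(Suc i, j) \<notin> n" "(i, Suc j) \<notin> n" using dl dp by blast+
  then have out': "(Suc i, Suc j) \<notin> n" using partition_downward_closed_Suc(2)[OF pn] by blast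
  define m where "m = insert (Suc i, Suc j) (l \<union> p)"
  have "l \<inter> p - n = {(i, j)}" unfolding leq peq using out by auto
  then have top: "diamond_top l p n = m" unfolding diamond_top_def m_def by auto
  have "is_partition m"
    unfolding m_def by (intro is_partition_insert_corner is_partition_Un pl pp) (simp_all add: leq peq)
  moreover have "m - l = {(i, Suc j), (Suc i, Suc j)}" "m - p = {(Suc i, j), (Suc i, Suc j)}"
    unfolding m_def leq peq using out out' by auto
  moreover have "diamond_bottom l p m = n"
  proof -
    have "m - (l \<union> p) = {(Suc i, Suc j)}" unfolding m_def leq peq using out' by auto
    moreover have "map_prod Suc Suc -` {(Suc i, Suc j)} = {(i, j)}" by auto
    ultimately show ?thesis unfolding diamond_bottom_def leq peq using out by auto
  qed
  moreover have "l \<subseteq> m" "p \<subseteq> m" by (auto simp: m_def)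
  ultimately show ?thesis
    unfolding top using pl pp by (simp add: domino_step_def is_domino_def)
qed

lemma diamond_below:
  assumes l: "domino_step l m" and p: "domino_step p m" and "l \<noteq> p"
  shows "domino_step (diamond_bottom l p m) l \<and> domino_step (diamond_bottom l p m) p \<and>
    diamond_top l p (diamond_bottom l p m) = m \<and>
    domino_weight q (diamond_bottom l p m) l * domino_weight q (diamond_bottom l p m) p =
    domino_weight q l m * domino_weight q p m"
proof (cases "(m - l) \<inter> (m - p) = {}")
  case True
  then show ?thesis by (rule diamond_below_disjoint[OF l p])
next
  case overlap: False
  show ?thesis
  proof (cases "vertical_domino (m - l)")
    case True
    then show ?thesis by (rule diamond_below_overlap[OF l _ p \<open>l \<noteq> p\<close> overlap])
  next
    case False
    then have "vertical_domino (m - p)"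
      using l p overlap \<open>l \<noteq> p\<close> overlapping_horizontal_downs_eq
      by (auto simp: domino_step_def is_domino_def)
    moreover have "(m - p) \<inter> (m - l) \<noteq> {}" using overlap by blast
    ultimately show ?thesis
      using diamond_below_overlap[OF p _ l, of q] \<open>l \<noteq> p\<close>
      by (auto simp: diamond_bottom_commute[of p] diamond_top_commute[of p] mult.commute)
  qed
qed

lemma diamond_above:
  assumes l: "domino_step n l" and p: "domino_step n p" and "l \<noteq> p"
  shows "domino_step l (diamond_top l p n) \<and> domino_step p (diamond_top l p n) \<and>
    diamond_bottom l p (diamond_top l p n) = n"
proof (cases "(l - n) \<inter> (p - n) = {}")
  case True
  then show ?thesis by (rule diamond_above_disjoint[OF l p])
next
  case overlap: False
  show ?thesis
  proof (cases "vertical_domino (l - n)")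
    case True
    then show ?thesis by (rule diamond_above_overlap[OF l _ p \<open>l \<noteq> p\<close> overlap])
  next
    case False
    then have "vertical_domino (p - n)"
      using l p overlap \<open>l \<noteq> p\<close> overlapping_horizontal_ups_eq
      by (auto simp: domino_step_def is_domino_def)
    moreover have "(p - n) \<inter> (l - n) \<noteq> {}" using overlap by blast
    ultimately show ?thesis
      using diamond_above_overlap[OF p _ l] \<open>l \<noteq> p\<close>
      by (auto simp: diamond_bottom_commute[of p] diamond_top_commute[of p])
  qed
qed

section \<open>The commutation relation and the sum of squares\<close>

lemma sum_nested_split_common:
  assumes "finite A" "\<And>x. x \<in> A \<Longrightarrow> finite (B x)" "\<And>x. x \<in> A \<Longrightarrow> b \<in> B x"
  shows "(\<Sum>x\<in>A. \<Sum>y\<in>B x. g x y) = (\<Sum>x\<in>A. g x b) + (\<Sum>(x, y)\<in>Sigma A (\<lambda>x. B x - {b}). g x y)"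
proof -
  have "(\<Sum>x\<in>A. \<Sum>y\<in>B x. g x y) = (\<Sum>x\<in>A. g x b + (\<Sum>y\<in>B x - {b}. g x y))"
    using assms by (intro sum.cong refl sum.remove) auto
  also have "\<dots> = (\<Sum>x\<in>A. g x b) + (\<Sum>x\<in>A. \<Sum>y\<in>B x - {b}. g x y)"
    by (rule sum.distrib)
  also have "(\<Sum>x\<in>A. \<Sum>y\<in>B x - {b}. g x y) = (\<Sum>(x, y)\<in>Sigma A (\<lambda>x. B x - {b}). g x y)"
    using assms by (intro sum.Sigma) auto
  finally show ?thesis .
qed

lemma bij_betw_diamond:
  "bij_betw (\<lambda>(m, p). (diamond_bottom a p m, p))
    (Sigma (domino_ups a) (\<lambda>m. domino_downs m - {a})) (Sigma (domino_downs a) (\<lambda>n. domino_ups n - {a}))"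
proof (rule bij_betw_byWitness[where f' = "\<lambda>(n, p). (diamond_top a p n, p)"])
  have below: "(diamond_bottom a p m, p) \<in> Sigma (domino_downs a) (\<lambda>n. domino_ups n - {a}) \<and>
      diamond_top a p (diamond_bottom a p m) = m"
    if "(m, p) \<in> Sigma (domino_ups a) (\<lambda>m. domino_downs m - {a})" for m p
  proof -
    from that have "domino_step a m" "domino_step p m" "a \<noteq> p"
      by auto
    from diamond_below[OF this] \<open>a \<noteq> p\<close> show ?thesis by auto
  qed
  have above: "(diamond_top a p n, p) \<in> Sigma (domino_ups a) (\<lambda>m. domino_downs m - {a}) \<and>
      diamond_bottom a p (diamond_top a p n) = n"
    if "(n, p) \<in> Sigma (domino_downs a) (\<lambda>n. domino_ups n - {a})" for n p
  proof -
    from that have "domino_step n a" "domino_step n p" "a \<noteq> p"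
      by auto
    from diamond_above[OF this] \<open>a \<noteq> p\<close> show ?thesis by auto
  qed
  from below above show
    "\<forall>y\<in>Sigma (domino_ups a) (\<lambda>m. domino_downs m - {a}).
      (\<lambda>(n, p). (diamond_top a p n, p)) ((\<lambda>(m, p). (diamond_bottom a p m, p)) y) = y"
    "\<forall>y\<in>Sigma (domino_downs a) (\<lambda>n. domino_ups n - {a}).
      (\<lambda>(m, p). (diamond_bottom a p m, p)) ((\<lambda>(n, p). (diamond_top a p n, p)) y) = y"
    "(\<lambda>(m, p). (diamond_bottom a p m, p)) ` Sigma (domino_ups a) (\<lambda>m. domino_downs m - {a})
      \<subseteq> Sigma (domino_downs a) (\<lambda>n. domino_ups n - {a})"
    "(\<lambda>(n, p). (diamond_top a p n, p)) ` Sigma (domino_downs a) (\<lambda>n. domino_ups n - {a})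
      \<subseteq> Sigma (domino_ups a) (\<lambda>m. domino_downs m - {a})"
    by fast+
qed

lemma sum_off_diagonal_diamond:
  "(\<Sum>(m, p)\<in>Sigma (domino_ups a) (\<lambda>m. domino_downs m - {a}). domino_weight q a m * domino_weight q p m * x p) =
    (\<Sum>(n, p)\<in>Sigma (domino_downs a) (\<lambda>n. domino_ups n - {a}). domino_weight q n a * domino_weight q n p * x p)"
  (is "(\<Sum>(m, p)\<in>?O\<^sub>1. _) = (\<Sum>(n, p)\<in>?O\<^sub>2. _)")
proof -
  let ?w = "domino_weight q"
  have weights: "?w (diamond_bottom a p m) a * ?w (diamond_bottom a p m) p = ?w a m * ?w p m"
    if "m \<in> domino_ups a" "p \<in> domino_downs m" "p \<noteq> a" for m p
    using that diamond_below[of a m p q] by auto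
  have "(\<Sum>(m, p)\<in>?O\<^sub>1. ?w a m * ?w p m * x p) =
      (\<Sum>y\<in>?O\<^sub>1. (\<lambda>(n, p). ?w n a * ?w n p * x p) ((\<lambda>(m, p). (diamond_bottom a p m, p)) y))"
  proof (intro sum.cong refl)
    fix y assume "y \<in> ?O\<^sub>1"
    then obtain m p where "y = (m, p)" "m \<in> domino_ups a" "p \<in> domino_downs m" "p \<noteq> a" by blast
    with weights show "(case y of (m, p) \<Rightarrow> ?w a m * ?w p m * x p) =
        (case case y of (m, p) \<Rightarrow> (diamond_bottom a p m, p) of (n, p) \<Rightarrow> ?w n a * ?w n p * x p)"
      by simp
  qed
  also have "\<dots> = (\<Sum>(n, p)\<in>?O\<^sub>2. ?w n a * ?w n p * x p)"
    by (rule sum.reindex_bij_betw[OF bij_betw_diamond])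
  finally show ?thesis .
qed

text \<open>The relation \<open>DU = UD + (1 + q) Id\<close> for the weighted down and up operators, applied to \<open>x\<close>.\<close>

lemma up_down_commutation:
  assumes "is_partition a" "0 \<le> q"
  shows "(\<Sum>m\<in>domino_ups a. domino_weight q a m * (\<Sum>p\<in>domino_downs m. domino_weight q p m * x p)) =
    (\<Sum>n\<in>domino_downs a. domino_weight q n a * (\<Sum>p\<in>domino_ups n. domino_weight q n p * x p)) + (1 + q) * x a"
proof -
  let ?w = "domino_weight q"
  let ?O\<^sub>1 = "Sigma (domino_ups a) (\<lambda>m. domino_downs m - {a})"
  let ?O\<^sub>2 = "Sigma (domino_downs a) (\<lambda>n. domino_ups n - {a})"
  have "(\<Sum>m\<in>domino_ups a. ?w a m * (\<Sum>p\<in>domino_downs m. ?w p m * x p)) =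
      (\<Sum>m\<in>domino_ups a. \<Sum>p\<in>domino_downs m. ?w a m * ?w p m * x p)"
    by (simp add: sum_distrib_left mult.assoc)
  also have "\<dots> = (\<Sum>m\<in>domino_ups a. (?w a m)\<^sup>2) * x a + (\<Sum>(m, p)\<in>?O\<^sub>1. ?w a m * ?w p m * x p)"
    by (subst sum_nested_split_common[where b = a])
      (auto simp: finite_domino_ups finite_domino_downs sum_distrib_right power2_eq_square)
  finally have up_down: "(\<Sum>m\<in>domino_ups a. ?w a m * (\<Sum>p\<in>domino_downs m. ?w p m * x p)) =
      (\<Sum>m\<in>domino_ups a. (?w a m)\<^sup>2) * x a + (\<Sum>(m, p)\<in>?O\<^sub>1. ?w a m * ?w p m * x p)" .
  have "(\<Sum>n\<in>domino_downs a. ?w n a * (\<Sum>p\<in>domino_ups n. ?w n p * x p)) =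
      (\<Sum>n\<in>domino_downs a. \<Sum>p\<in>domino_ups n. ?w n a * ?w n p * x p)"
    by (simp add: sum_distrib_left mult.assoc)
  also have "\<dots> = (\<Sum>n\<in>domino_downs a. (?w n a)\<^sup>2) * x a + (\<Sum>(n, p)\<in>?O\<^sub>2. ?w n a * ?w n p * x p)"
    by (subst sum_nested_split_common[where b = a])
      (auto simp: finite_domino_ups finite_domino_downs sum_distrib_right power2_eq_square)
  finally have down_up: "(\<Sum>n\<in>domino_downs a. ?w n a * (\<Sum>p\<in>domino_ups n. ?w n p * x p)) =
      (\<Sum>n\<in>domino_downs a. (?w n a)\<^sup>2) * x a + (\<Sum>(n, p)\<in>?O\<^sub>2. ?w n a * ?w n p * x p)" .
  show ?thesis
    unfolding up_down down_up sum_off_diagonal_diamond sum_domino_weight_sq_ups_downs[OF assms]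
    by (simp add: algebra_simps)
qed

lemma not_domino_step_delta: "\<not> domino_step n (delta r)"
proof
  assume step: "domino_step n (delta r)"
  then consider i j where "delta r - n = {(i, j), (Suc i, j)}" | i j where "delta r - n = {(i, j), (i, Suc j)}"
    by (auto simp: domino_step_def is_domino_def vertical_domino_def horizontal_domino_def)
  then show False
  proof cases
    case (1 i j)
    then have "(Suc i, j) \<in> delta r" by blast
    then have "(i, Suc j) \<in> delta r" by (simp add: delta_def)
    with 1 show False using domino_step_Diff_upward[OF step, of i j i "Suc j"] by auto
  next
    case (2 i j)
    then have "(i, Suc j) \<in> delta r" by blast
    then have "(Suc i, j) \<in> delta r" by (simp add: delta_def)
    with 2 show False using domino_step_Diff_upward[OF step, of i j "Suc i" j] by auto
  qed
qed

lemma sum_ups_dpoly_Suc: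
  assumes "0 < q" "is_partition a"
  shows "(\<Sum>m\<in>domino_ups a. domino_weight q a m * dpoly r (Suc k) m q) = real (Suc k) * (1 + q) * dpoly r k a q"
  using assms(2)
proof (induction k arbitrary: a)
  case 0
  have "(\<Sum>m\<in>domino_ups a. domino_weight q a m * dpoly r (Suc 0) m q) =
      (\<Sum>n\<in>domino_downs a. domino_weight q n a * (\<Sum>p\<in>domino_ups n. domino_weight q n p * dpoly r 0 p q)) +
      (1 + q) * dpoly r 0 a q"
    unfolding dpoly_Suc[OF assms(1), of r 0] using 0 assms(1) by (intro up_down_commutation) simp_all
  also have "dpoly r 0 p q = 0" if "domino_step n p" for n p
    using that not_domino_step_delta by (auto simp: dpoly_0[OF assms(1)])
  then have "(\<Sum>n\<in>domino_downs a. domino_weight q n a * (\<Sum>p\<in>domino_ups n. domino_weight q n p * dpoly r 0 p q)) = 0"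
    by simp
  finally show ?case by simp
next
  case (Suc k)
  have "(\<Sum>m\<in>domino_ups a. domino_weight q a m * dpoly r (Suc (Suc k)) m q) =
      (\<Sum>n\<in>domino_downs a. domino_weight q n a * (\<Sum>p\<in>domino_ups n. domino_weight q n p * dpoly r (Suc k) p q)) +
      (1 + q) * dpoly r (Suc k) a q"
    unfolding dpoly_Suc[OF assms(1), of r "Suc k"] using Suc.prems assms(1)
    by (intro up_down_commutation) simp_all
  also have "(\<Sum>n\<in>domino_downs a. domino_weight q n a * (\<Sum>p\<in>domino_ups n. domino_weight q n p * dpoly r (Suc k) p q)) =
      (\<Sum>n\<in>domino_downs a. domino_weight q n a * (real (Suc k) * (1 + q) * dpoly r k n q))"
    using Suc.IH by (intro sum.cong) (auto simp: domino_step_def)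
  also have "\<dots> = real (Suc k) * (1 + q) * dpoly r (Suc k) a q"
    unfolding dpoly_Suc[OF assms(1), of r k] by (simp add: sum_distrib_left mult_ac)
  finally show ?case by (simp add: algebra_simps)
qed

lemma sum_sq_dpoly_0: "0 < q \<Longrightarrow> (\<Sum>l\<in>P r 0. (dpoly r 0 l q)\<^sup>2) = 1"
proof -
  assume "0 < q"
  moreover have "delta r \<in> P r 0"
    using is_partition_delta by (simp add: P_def has_2core_def)
  ultimately show ?thesis
    by (simp add: dpoly_0 finite_P if_distrib[of "\<lambda>x. x\<^sup>2"] sum.delta cong: if_cong)
qed

lemma sum_sq_dpoly_Suc:
  assumes "0 < q"
  shows "(\<Sum>m\<in>P r (Suc n). (dpoly r (Suc n) m q)\<^sup>2) = real (Suc n) * (1 + q) * (\<Sum>l\<in>P r n. (dpoly r n l q)\<^sup>2)"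
proof -
  let ?f = "\<lambda>l. dpoly r n l q" and ?g = "\<lambda>m. dpoly r (Suc n) m q" and ?w = "domino_weight q"
  have down: "?g m = (\<Sum>l\<in>P r n. if domino_step l m then ?w l m * ?f l else 0)" for m
    \<comment> \<open>\<open>dpoly\<close> vanishes off \<open>P r n\<close>, so this needs no invariance of the 2-core under removal\<close>
  proof -
    have "?g m = (\<Sum>l\<in>domino_downs m \<inter> P r n. ?w l m * ?f l)"
      unfolding dpoly_Suc[OF assms]
      by (rule sum.mono_neutral_right) (auto simp: finite_domino_downs dpoly_eq_0_if_not_mem_P)
    also have "domino_downs m \<inter> P r n = P r n \<inter> domino_downs m" by blast
    finally show ?thesis by (simp add: sum.inter_restrict[OF finite_P])
  qed
  have up: "(\<Sum>m\<in>P r (Suc n). if domino_step l m then ?w l m * ?g m else 0) =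
      real (Suc n) * (1 + q) * ?f l" if "l \<in> P r n" for l
  proof -
    have "(\<Sum>m\<in>P r (Suc n). if domino_step l m then ?w l m * ?g m else 0) =
        (\<Sum>m\<in>P r (Suc n) \<inter> domino_ups l. ?w l m * ?g m)"
      by (simp add: sum.inter_restrict[OF finite_P])
    also have "P r (Suc n) \<inter> domino_ups l = domino_ups l"
      using that domino_step_mem_P by auto
    also have "(\<Sum>m\<in>domino_ups l. ?w l m * ?g m) = real (Suc n) * (1 + q) * ?f l"
      using that by (intro sum_ups_dpoly_Suc[OF assms]) (simp add: P_def)
    finally show ?thesis .
  qed
  have "(\<Sum>m\<in>P r (Suc n). (?g m)\<^sup>2) =
      (\<Sum>m\<in>P r (Suc n). \<Sum>l\<in>P r n. if domino_step l m then ?f l * (?w l m * ?g m) else 0)"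
    by (subst (1) power2_eq_square, subst (2) down)
      (simp add: sum_distrib_left mult_ac if_distrib cong: if_cong)
  also have "\<dots> = (\<Sum>l\<in>P r n. ?f l * (\<Sum>m\<in>P r (Suc n). if domino_step l m then ?w l m * ?g m else 0))"
    by (subst sum.swap) (simp add: sum_distrib_left if_distrib cong: if_cong)
  also have "\<dots> = real (Suc n) * (1 + q) * (\<Sum>l\<in>P r n. (?f l)\<^sup>2)"
    by (simp add: up sum_distrib_left power2_eq_square mult_ac)
  finally show ?thesis .
qed

theorem proposition3p13:
  fixes n r :: nat and q :: real
  assumes "n \<ge> 1" and "q > 0"
  shows "(\<Sum>lam\<in>P r n. (dpoly r n lam q)\<^sup>2) = (1 + q) ^ n * fact n"
proof (induction n)
  \<comment> \<open>the identity holds for \<open>n = 0\<close> too\<close>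
  case 0
  then show ?case using sum_sq_dpoly_0[OF \<open>q > 0\<close>] by simp
next
  case (Suc n)
  then show ?case using sum_sq_dpoly_Suc[OF \<open>q > 0\<close>, of r n] by (simp add: algebra_simps)
qed

end
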